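(* Let $n$ be a positive integer with $n \equiv 3 \pmod 6$ and \[n \notin \{9, 15, 21, 141, 153, 165, 177, 189, 231, 249, 261, 285, 351, 357\},\] and let $\rho$ be an integer with $1 \le \rho \le n/3$. Then there exists an $(n+\rho,4)$-packing with exactly $\rho n/3$ blocks in which the largest partial parallel class has size $\rho$.
   Context: For integers $v \ge k \ge 2$, a $(v,k)$-packing is a pair $(X,\mathcal{B})$ where $X$ is a set of $v$ points and $\mathcal{B}$ is a set of $k$-subsets of $X$ (blocks) such that every pair of distinct points lies in at most one block. A partial parallel class (PPC) is a set of pairwise disjoint blocks; its size is the number of blocks in it. "The largest PPC has size $\rho$" means that the packing contains a PPC of size $\rho$ but no PPC of size $\rho+1$. *)

theory Defs
  imports Main
begin

definition packing :: "nat \<Rightarrow> nat \<Rightarrow> 'a set \<Rightarrow> 'a set set \<Rightarrow> bool" where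
  "packing v k X B \<longleftrightarrow> finite X \<and> card X = v \<and>
     (\<forall>b\<in>B. b \<subseteq> X \<and> card b = k) \<and>
     (\<forall>x\<in>X. \<forall>y\<in>X. x \<noteq> y \<longrightarrow> card {b\<in>B. x \<in> b \<and> y \<in> b} \<le> 1)"

definition ppc :: "'a set set \<Rightarrow> 'a set set \<Rightarrow> bool" where
  "ppc B P \<longleftrightarrow> P \<subseteq> B \<and> (\<forall>b\<in>P. \<forall>c\<in>P. b \<noteq> c \<longrightarrow> b \<inter> c = {})"

definition largest_ppc :: "'a set set \<Rightarrow> nat \<Rightarrow> bool" where
  "largest_ppc B \<rho> \<longleftrightarrow> (\<exists>P. ppc B P \<and> card P = \<rho>) \<and>
     \<not> (\<exists>P. ppc B P \<and> card P = \<rho> + 1)"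

end

theory Submission
  imports Defs "HOL-Library.Countable" "HOL-Library.Product_Plus" "HOL-Library.Product_Lexorder"
    "HOL-Computational_Algebra.Primes"
begin

(* Write n = 3m, so m is odd and m <> 3. Suppose there are rho parallel classes of triples on 3m
   points such that no pair of points lies in two of the triples, together with pairwise disjoint
   representatives T_i, one triple from each class. Adding a new point inf_i to every triple of the
   i-th class gives a (3m + rho, 4)-packing with rho m blocks. Every block contains exactly one new
   point, so at most rho blocks are pairwise disjoint, and the blocks through the T_i are rho of
   them.

   The classes are translates C + g of one base class C on G x {0, 1, 2}, where
   G = Z_q x Z_s x Z_(3^k)[i], m = q s 9^k, q in {1, 3} and s is coprime to 6. Two translates share
   no pair as soon as the differences (two levels and an element of G) between the points of a
   common triple of C are all distinct. Apart from q triples inside Z_q x {0} x {0, 1, 2}, the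
   triples of C are {(e_u, k_u j, l_u)} for a few patterns of slots (e_u, l_u, k_u), with j running
   through one representative of each pair {w, -w} of nonzero residues; two slots then differ by
   (k_v - k_u) j, and making the multipliers and their differences units turns the distinctness of
   all differences into a finite check on the patterns. Translates of a triple of C meeting every
   level once are pairwise disjoint and serve as the representatives; for q = 3 such a triple
   needs a nonzero parameter j, which is where m <> 3 is used. *)

section \<open>Packings from parallel classes\<close>

lemma ppc_image_iff:
  assumes "inj h"
  shows "ppc ((`) h ` B) P' \<longleftrightarrow> (\<exists>P. ppc B P \<and> P' = (`) h ` P)"
proof
  assume P': "ppc ((`) h ` B) P'"
  define P where "P = {b \<in> B. h ` b \<in> P'}"
  have "P' \<subseteq> (`) h ` B" using P' by (simp add: ppc_def)
  then have "P' = (`) h ` P" unfolding P_def by blast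
  moreover have "ppc B P"
    unfolding ppc_def
  proof (intro conjI ballI impI)
    show "P \<subseteq> B" by (simp add: P_def)
  next
    fix b c assume "b \<in> P" "c \<in> P" "b \<noteq> c"
    then have "h ` b \<in> P'" "h ` c \<in> P'" "h ` b \<noteq> h ` c"
      using assms by (simp_all add: P_def inj_image_eq_iff)
    then have "h ` b \<inter> h ` c = {}" using P' by (simp add: ppc_def)
    then show "b \<inter> c = {}" by blast
  qed
  ultimately show "\<exists>P. ppc B P \<and> P' = (`) h ` P" by blast
next
  assume "\<exists>P. ppc B P \<and> P' = (`) h ` P"
  then obtain P where P: "ppc B P" "P' = (`) h ` P" by blast
  show "ppc ((`) h ` B) P'"
    unfolding ppc_def
  proof (intro conjI ballI impI)
    show "P' \<subseteq> (`) h ` B" using P by (auto simp: ppc_def)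
  next
    fix b c assume "b \<in> P'" "c \<in> P'" "b \<noteq> c"
    then obtain b0 c0 where "b0 \<in> P" "c0 \<in> P" "b0 \<noteq> c0" "b = h ` b0" "c = h ` c0"
      using P(2) by auto
    then show "b \<inter> c = {}"
      using P(1) assms by (simp add: ppc_def image_Int[symmetric])
  qed
qed

lemma packing_image:
  assumes "inj h" and "packing v k X B"
  shows "packing v k (h ` X) ((`) h ` B)"
  unfolding packing_def
proof (intro conjI ballI impI)
  show "finite (h ` X)" "card (h ` X) = v"
    using assms by (auto simp: packing_def card_image inj_on_subset)
next
  fix b assume "b \<in> (`) h ` B"
  then show "b \<subseteq> h ` X" "card b = k"
    using assms by (auto simp: packing_def card_image inj_on_subset)
next
  fix x y assume "x \<in> h ` X" "y \<in> h ` X" "x \<noteq> y"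
  then obtain x0 y0 where xy: "x0 \<in> X" "y0 \<in> X" "x = h x0" "y = h y0" "x0 \<noteq> y0" by auto
  have "{b \<in> (`) h ` B. x \<in> b \<and> y \<in> b} = (`) h ` {b \<in> B. x0 \<in> b \<and> y0 \<in> b}"
    using xy assms(1) by (auto simp: inj_image_mem_iff inj_eq)
  moreover have "inj ((`) h)"
    using assms(1) by (simp add: inj_image_eq_iff inj_def)
  ultimately show "card {b \<in> (`) h ` B. x \<in> b \<and> y \<in> b} \<le> 1"
    using assms(2) xy by (simp add: packing_def card_image inj_on_subset)
qed

lemma largest_ppc_image:
  assumes "inj h" and "largest_ppc B \<rho>"
  shows "largest_ppc ((`) h ` B) \<rho>"
proof -
  have "card ((`) h ` P) = card P" for P :: "'a set set"
    using assms(1) by (intro card_image inj_onI) (auto simp: inj_image_eq_iff)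
  then show ?thesis
    using assms unfolding largest_ppc_def ppc_image_iff[OF assms(1)] by metis
qed

lemma packing_in_nat:
  fixes X :: "'a::countable set"
  assumes "packing v k X B" and "finite B" and "largest_ppc B \<rho>"
  shows "\<exists>(X' :: nat set) B'. packing v k X' B' \<and> finite B' \<and> card B' = card B \<and> largest_ppc B' \<rho>"
proof (intro exI conjI)
  have "inj ((`) to_nat :: 'a set \<Rightarrow> nat set)"
    by (simp add: inj_def inj_image_eq_iff)
  then show "card ((`) to_nat ` B) = card B"
    by (simp add: card_image inj_on_subset)
qed (use assms in \<open>auto intro: packing_image largest_ppc_image\<close>)

lemma ppc_card_le:
  assumes "ppc B P" and "finite M" and "\<And>b. b \<in> B \<Longrightarrow> b \<inter> M \<noteq> {}"
  shows "card P \<le> card M"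
proof -
  have "P \<subseteq> B" using assms(1) by (simp add: ppc_def)
  then have "\<forall>b\<in>P. \<exists>x. x \<in> b \<inter> M" using assms(3) by blast
  then obtain f where f: "\<And>b. b \<in> P \<Longrightarrow> f b \<in> b \<inter> M" by metis
  have "inj_on f P"
  proof (rule inj_onI)
    fix b c assume "b \<in> P" "c \<in> P" "f b = f c"
    then have "b \<inter> c \<noteq> {}" using f by (metis IntD1 disjoint_iff)
    with \<open>b \<in> P\<close> \<open>c \<in> P\<close> assms(1) show "b = c" by (auto simp: ppc_def)
  qed
  then show ?thesis
    using f assms(2) by (intro card_inj_on_le) auto
qed

definition adjoin_points :: "'i set \<Rightarrow> ('i \<Rightarrow> 'p set set) \<Rightarrow> ('p + 'i) set set" where
  "adjoin_points I cls = (\<lambda>(i, T). insert (Inr i) (Inl ` T)) ` Sigma I cls"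

lemma adjoined_block_eq_iff:
  "insert (Inr i) (Inl ` T) = insert (Inr i') (Inl ` T') \<longleftrightarrow> i = i' \<and> T = T'"
  by (auto simp: insert_eq_iff)

lemma mem_adjoin_points:
  "b \<in> adjoin_points I cls \<longleftrightarrow> (\<exists>i T. i \<in> I \<and> T \<in> cls i \<and> b = insert (Inr i) (Inl ` T))"
  unfolding adjoin_points_def by auto

lemma card_adjoin_points:
  assumes "finite I" and "\<And>i. i \<in> I \<Longrightarrow> finite (cls i) \<and> card (cls i) = m"
  shows "finite (adjoin_points I cls) \<and> card (adjoin_points I cls) = card I * m"
proof -
  have "inj_on (\<lambda>(i, T). insert (Inr i) (Inl ` T)) (Sigma I cls)"
    by (auto intro: inj_onI simp: adjoined_block_eq_iff)
  then show ?thesis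
    using assms unfolding adjoin_points_def by (simp add: card_image card_SigmaI)
qed

lemma adjoin_points_pair_once:
  assumes class_disjoint: "\<And>i T T'. i \<in> I \<Longrightarrow> T \<in> cls i \<Longrightarrow> T' \<in> cls i \<Longrightarrow> T \<noteq> T' \<Longrightarrow> T \<inter> T' = {}"
    and pair_once: "\<And>i i' T T' x y. i \<in> I \<Longrightarrow> i' \<in> I \<Longrightarrow> T \<in> cls i \<Longrightarrow> T' \<in> cls i' \<Longrightarrow>
      x \<noteq> y \<Longrightarrow> {x, y} \<subseteq> T \<inter> T' \<Longrightarrow> i = i' \<and> T = T'"
    and blocks: "b \<in> adjoin_points I cls" "b' \<in> adjoin_points I cls"
    and xy: "x \<noteq> y" "{x, y} \<subseteq> b \<inter> b'"
  shows "b = b'"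
proof -
  obtain i T i' T' where b: "i \<in> I" "T \<in> cls i" "b = insert (Inr i) (Inl ` T)"
    and b': "i' \<in> I" "T' \<in> cls i'" "b' = insert (Inr i') (Inl ` T')"
    using blocks by (auto simp: mem_adjoin_points)
  show "b = b'"
  proof (cases "\<exists>x0 y0. x = Inl x0 \<and> y = Inl y0")
    case True
    then obtain x0 y0 where "x = Inl x0" "y = Inl y0" by blast
    then have "{x0, y0} \<subseteq> T \<inter> T'" "x0 \<noteq> y0"
      using xy unfolding b(3) b'(3) by auto
    then show ?thesis using pair_once[OF b(1) b'(1) b(2) b'(2)] b b' by blast
  next
    case False
    then obtain j where "Inr j \<in> {x, y}" by (cases x; cases y) auto
    then have "i = i'" using xy unfolding b(3) b'(3) by auto
    obtain z where "Inl z \<in> {x, y}"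
      using xy unfolding b(3) b'(3) by (cases x; cases y) auto
    then have "z \<in> T \<inter> T'" using xy unfolding b(3) b'(3) by auto
    then show ?thesis using class_disjoint[OF b(1,2)] b b' \<open>i = i'\<close> by blast
  qed
qed

lemma packing_adjoin_points:
  assumes N: "finite N" "card N = v" and I: "finite I"
    and triple: "\<And>i T. i \<in> I \<Longrightarrow> T \<in> cls i \<Longrightarrow> T \<subseteq> N \<and> card T = 3"
    and class_disjoint: "\<And>i T T'. i \<in> I \<Longrightarrow> T \<in> cls i \<Longrightarrow> T' \<in> cls i \<Longrightarrow> T \<noteq> T' \<Longrightarrow> T \<inter> T' = {}"
    and pair_once: "\<And>i i' T T' x y. i \<in> I \<Longrightarrow> i' \<in> I \<Longrightarrow> T \<in> cls i \<Longrightarrow> T' \<in> cls i' \<Longrightarrow>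
      x \<noteq> y \<Longrightarrow> {x, y} \<subseteq> T \<inter> T' \<Longrightarrow> i = i' \<and> T = T'"
    and fin: "finite (adjoin_points I cls)"
  shows "packing (v + card I) 4 (Inl ` N \<union> Inr ` I) (adjoin_points I cls)"
  unfolding packing_def
proof (intro conjI ballI impI)
  show "finite (Inl ` N \<union> Inr ` I)" using N I by simp
  show "card (Inl ` N \<union> Inr ` I) = v + card I"
    using N I by (subst card_Un_disjoint) (auto simp: card_image)
next
  fix b assume "b \<in> adjoin_points I cls"
  then obtain i T where "i \<in> I" "T \<in> cls i" "b = insert (Inr i) (Inl ` T)"
    by (auto simp: mem_adjoin_points)
  moreover from this triple[of i T] have "T \<subseteq> N" "card T = 3" by auto
  moreover from this have "finite T" by (intro card_ge_0_finite) simp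
  ultimately show "b \<subseteq> Inl ` N \<union> Inr ` I" "card b = 4"
    by (auto simp: card_image card_insert_if)
next
  fix x y assume "x \<in> Inl ` N \<union> Inr ` I" "y \<in> Inl ` N \<union> Inr ` I" "x \<noteq> y"
  then show "card {b \<in> adjoin_points I cls. x \<in> b \<and> y \<in> b} \<le> 1"
    using adjoin_points_pair_once[OF class_disjoint pair_once] fin
    by (auto simp: card_le_Suc0_iff_eq)
qed

lemma largest_ppc_adjoin_points:
  assumes "finite I"
    and rep: "\<And>i. i \<in> I \<Longrightarrow> rep i \<in> cls i"
    and rep_disjoint: "\<And>i i'. i \<in> I \<Longrightarrow> i' \<in> I \<Longrightarrow> i \<noteq> i' \<Longrightarrow> rep i \<inter> rep i' = {}"
  shows "largest_ppc (adjoin_points I cls) (card I)"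
  unfolding largest_ppc_def
proof
  let ?P = "(\<lambda>i. insert (Inr i) (Inl ` rep i)) ` I"
  have "inj_on (\<lambda>i. insert (Inr i) (Inl ` rep i)) I"
    by (auto intro: inj_onI simp: adjoined_block_eq_iff)
  moreover have "ppc (adjoin_points I cls) ?P"
    unfolding ppc_def
  proof (intro conjI ballI impI)
    show "?P \<subseteq> adjoin_points I cls" using rep by (blast intro: mem_adjoin_points[THEN iffD2])
  next
    fix b c assume "b \<in> ?P" "c \<in> ?P" "b \<noteq> c"
    then show "b \<inter> c = {}" using rep_disjoint by auto
  qed
  ultimately show "\<exists>P. ppc (adjoin_points I cls) P \<and> card P = card I"
    by (metis card_image)
  have "card P \<le> card I" if "ppc (adjoin_points I cls) P" for P
    using ppc_card_le[OF that, of "Inr ` I"] assms(1) by (auto simp: mem_adjoin_points card_image)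
  then show "\<not> (\<exists>P. ppc (adjoin_points I cls) P \<and> card P = card I + 1)" by fastforce
qed

lemma image_parallel_class:
  assumes f: "inj_on f N \<and> f ` N \<subseteq> N"
    and C: "\<And>T. T \<in> C \<Longrightarrow> T \<subseteq> N \<and> card T = 3"
    and C_disjoint: "\<And>T T'. T \<in> C \<Longrightarrow> T' \<in> C \<Longrightarrow> T \<noteq> T' \<Longrightarrow> T \<inter> T' = {}"
  shows "inj_on ((`) f) C"
    and "T \<in> (`) f ` C \<Longrightarrow> T \<subseteq> N \<and> card T = 3"
    and "T \<in> (`) f ` C \<Longrightarrow> T' \<in> (`) f ` C \<Longrightarrow> T \<noteq> T' \<Longrightarrow> T \<inter> T' = {}"
proof -
  show "inj_on ((`) f) C"
    using f C by (intro inj_onI) (metis inj_on_image_eq_iff)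
next
  assume "T \<in> (`) f ` C"
  then obtain T1 where T1: "T1 \<in> C" "T = f ` T1" by blast
  then have "inj_on f T1" using f C by (blast intro: inj_on_subset)
  then show "T \<subseteq> N \<and> card T = 3" using f C T1 by (auto simp: card_image)
next
  assume "T \<in> (`) f ` C" "T' \<in> (`) f ` C" "T \<noteq> T'"
  then obtain T1 T2 where T12: "T1 \<in> C" "T2 \<in> C" "T = f ` T1" "T' = f ` T2" "T1 \<noteq> T2" by blast
  then have "T1 \<inter> T2 = {}" using C_disjoint by blast
  then show "T \<inter> T' = {}" using inj_on_image_Int[of f N T1 T2] f C T12 by auto
qed

lemma packing_from_translates:
  fixes act :: "'g \<Rightarrow> 'p \<Rightarrow> 'p" and C :: "'p set set"
  assumes N: "finite N" "card N = 3 * card G" and G: "finite G" "\<rho> \<le> card G"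
    and act: "\<And>g. g \<in> G \<Longrightarrow> inj_on (act g) N \<and> act g ` N \<subseteq> N"
    and C: "finite C" "card C = card G" "\<And>T. T \<in> C \<Longrightarrow> T \<subseteq> N \<and> card T = 3"
    and C_disjoint: "\<And>T T'. T \<in> C \<Longrightarrow> T' \<in> C \<Longrightarrow> T \<noteq> T' \<Longrightarrow> T \<inter> T' = {}"
    and pair_once: "\<And>g g' T T' x y. g \<in> G \<Longrightarrow> g' \<in> G \<Longrightarrow> T \<in> C \<Longrightarrow> T' \<in> C \<Longrightarrow>
      x \<noteq> y \<Longrightarrow> {x, y} \<subseteq> act g ` T \<inter> act g' ` T' \<Longrightarrow> g = g' \<and> T = T'"
    and T0: "T0 \<in> C" "\<And>g g'. g \<in> G \<Longrightarrow> g' \<in> G \<Longrightarrow> g \<noteq> g' \<Longrightarrow> act g ` T0 \<inter> act g' ` T0 = {}"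
  shows "\<exists>(X :: ('p + 'g) set) B. packing (3 * card G + \<rho>) 4 X B \<and> finite B
    \<and> card B = \<rho> * card G \<and> largest_ppc B \<rho>"
proof -
  obtain I where I: "I \<subseteq> G" "card I = \<rho>"
    using obtain_subset_with_card_n[OF G(2)] by metis
  have "finite I" using I(1) G(1) by (rule finite_subset)
  define cls where "cls g = (`) (act g) ` C" for g
  have image_class: "inj_on ((`) (act g)) C"
    "T \<in> cls g \<Longrightarrow> T \<subseteq> N \<and> card T = 3"
    "T \<in> cls g \<Longrightarrow> T' \<in> cls g \<Longrightarrow> T \<noteq> T' \<Longrightarrow> T \<inter> T' = {}"
    if "g \<in> I" for g T T'
  proof -
    have "g \<in> G" using that I(1) by blast
    note facts = image_parallel_class[OF act[OF this] C(3) C_disjoint]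
    show "inj_on ((`) (act g)) C" by (rule facts(1))
    show "T \<in> cls g \<Longrightarrow> T \<subseteq> N \<and> card T = 3" unfolding cls_def by (rule facts(2))
    show "T \<in> cls g \<Longrightarrow> T' \<in> cls g \<Longrightarrow> T \<noteq> T' \<Longrightarrow> T \<inter> T' = {}"
      unfolding cls_def by (rule facts(3))
  qed
  have class_card: "finite (cls g) \<and> card (cls g) = card G" if "g \<in> I" for g
    using image_class(1)[OF that] C(1,2) unfolding cls_def by (auto simp: card_image)
  have pair_once': "g = g' \<and> T = T'"
    if asm: "g \<in> I" "g' \<in> I" "T \<in> cls g" "T' \<in> cls g'" "x \<noteq> y" "{x, y} \<subseteq> T \<inter> T'"
    for g g' T T' x y
  proof -
    obtain T1 T2 where "g \<in> G" "g' \<in> G" "T1 \<in> C" "T2 \<in> C" "T = act g ` T1" "T' = act g' ` T2"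
      using asm(1-4) I(1) unfolding cls_def by blast
    then show ?thesis using pair_once[of g g' T1 T2 x y] asm(5,6) by auto
  qed
  have fin: "finite (adjoin_points I cls) \<and> card (adjoin_points I cls) = \<rho> * card G"
    using card_adjoin_points[OF \<open>finite I\<close> class_card] I(2) by simp
  moreover have "packing (3 * card G + \<rho>) 4 (Inl ` N \<union> Inr ` I) (adjoin_points I cls)"
    using packing_adjoin_points[OF N(1,2) \<open>finite I\<close> image_class(2,3) pair_once'] fin I(2) by simp
  moreover have "largest_ppc (adjoin_points I cls) \<rho>"
    using largest_ppc_adjoin_points[OF \<open>finite I\<close>, of "\<lambda>g. act g ` T0" cls] T0 I
    unfolding cls_def by blast
  ultimately show ?thesis by blast
qed

section \<open>The residue ring Z_r x Z_t[i]\<close>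

text \<open>A triple (x, y, z) stands for (x, y + z i) in Z x Z[i].\<close>
type_synonym zgi = "int \<times> int \<times> int"

fun zgi_mult :: "zgi \<Rightarrow> zgi \<Rightarrow> zgi" where
  "zgi_mult (c, a, b) (x, y, z) = (c * x, a * y - b * z, b * y + a * z)"

fun zero_mod :: "int \<Rightarrow> int \<Rightarrow> zgi \<Rightarrow> bool" where
  "zero_mod r t (x, y, z) \<longleftrightarrow> r dvd x \<and> t dvd y \<and> t dvd z"

fun reduce :: "int \<Rightarrow> int \<Rightarrow> zgi \<Rightarrow> zgi" where
  "reduce r t (x, y, z) = (x mod r, y mod t, z mod t)"

text \<open>Units of Z_r x Z_t[i] for r coprime to 6 and t a power of 3 (\<open>zero_mod_mult_cancel\<close>):
  c dvd 216 = 6^3 makes c a product of 2s and 3s, and a + b i is a unit modulo 3 since 3 is inert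
  in Z[i]. Using Z_t[i] instead of Z_t provides the residue field F_9, which has enough units for
  the patterns below.\<close>
fun zgi_unit :: "zgi \<Rightarrow> bool" where
  "zgi_unit (c, a, b) \<longleftrightarrow> c dvd 216 \<and> \<not> 3 dvd a * a + b * b"

lemma zgi_mult_diff_left: "zgi_mult (k - k') j = zgi_mult k j - zgi_mult k' j"
  by (cases k; cases k'; cases j) (simp add: algebra_simps)

lemma zgi_mult_add_right: "zgi_mult k (j + j') = zgi_mult k j + zgi_mult k j'"
  by (cases k; cases j; cases j') (simp add: algebra_simps)

lemma zgi_mult_diff_right: "zgi_mult k (j - j') = zgi_mult k j - zgi_mult k j'"
  by (cases k; cases j; cases j') (simp add: algebra_simps)

lemma zgi_mult_minus_left: "zgi_mult (- k) j = - zgi_mult k j"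
  by (cases k; cases j) (simp add: algebra_simps)

lemma zgi_mult_zero_left [simp]: "zgi_mult 0 j = 0"
  by (cases j) (simp add: zero_prod_def)

lemma zero_mod_add: "zero_mod r t u \<Longrightarrow> zero_mod r t v \<Longrightarrow> zero_mod r t (u + v)"
  by (cases u; cases v) auto

lemma zero_mod_diff: "zero_mod r t u \<Longrightarrow> zero_mod r t v \<Longrightarrow> zero_mod r t (u - v)"
  by (cases u; cases v) auto

lemma zero_mod_minus_iff [simp]: "zero_mod r t (- u) \<longleftrightarrow> zero_mod r t u"
  by (cases u) auto

lemma reduce_eq_iff: "reduce r t u = reduce r t v \<longleftrightarrow> zero_mod r t (u - v)"
  by (cases u; cases v) (simp add: mod_eq_dvd_iff)

lemma zero_mod_reduce_diff: "zero_mod r t (reduce r t u - u)"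
  by (cases u) (auto simp: mod_eq_dvd_iff[symmetric])

locale gauss_residues =
  fixes r t :: int and a :: nat
  assumes r_pos: "r > 0" and coprime_r_6: "coprime r 6" and t_eq: "t = 3 ^ a"
begin

abbreviation R :: "zgi set" where
  "R \<equiv> {0..<r} \<times> {0..<t} \<times> {0..<t}"

lemma t_pos: "t > 0"
  by (simp add: t_eq)

lemma reduce_in_R: "reduce r t u \<in> R"
  using r_pos t_pos by (cases u) auto

lemma reduce_R: "u \<in> R \<Longrightarrow> reduce r t u = u"
  by auto

lemma R_eqI: "u \<in> R \<Longrightarrow> v \<in> R \<Longrightarrow> zero_mod r t (u - v) \<Longrightarrow> u = v"
  by (metis reduce_R reduce_eq_iff)

lemma zero_in_R: "0 \<in> R"
  using r_pos t_pos by (simp add: zero_prod_def)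

lemma card_R: "card R = nat r * nat t * nat t"
  by (simp add: card_cartesian_product)

lemma zero_mod_mult_cancel:
  assumes "zgi_unit k" and "zero_mod r t (zgi_mult k d)"
  shows "zero_mod r t d"
proof -
  obtain c a' b where k: "k = (c, a', b)" by (cases k)
  obtain x y z where d: "d = (x, y, z)" by (cases d)
  have "coprime r (6 ^ 3)" using coprime_r_6 coprime_power_right_iff[of r 6 3] by simp
  then have "coprime c r"
    using coprime_divisors[of c "6 ^ 3" r r] assms(1) k by (simp add: coprime_commute)
  moreover have "r dvd c * x" using assms(2) k d by simp
  ultimately have "r dvd x" by (simp add: coprime_commute coprime_dvd_mult_right_iff)
  define N where "N = a' * a' + b * b"
  have "coprime 3 N" using assms(1) k by (simp add: N_def prime_imp_coprime)
  then have "coprime N t" by (simp add: t_eq coprime_commute)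
  have "t dvd a' * y - b * z" "t dvd b * y + a' * z" using assms(2) k d by simp_all
  moreover have "N * y = a' * (a' * y - b * z) + b * (b * y + a' * z)"
    and "N * z = a' * (b * y + a' * z) - b * (a' * y - b * z)"
    by (simp_all add: N_def algebra_simps)
  ultimately have "t dvd N * y" "t dvd N * z" by (metis dvd_add dvd_diff dvd_mult)+
  with \<open>coprime N t\<close> have "t dvd y" "t dvd z"
    by (simp_all add: coprime_commute coprime_dvd_mult_right_iff)
  with \<open>r dvd x\<close> show ?thesis using d by simp
qed

definition residue_neg :: "zgi \<Rightarrow> zgi" where
  "residue_neg w = reduce r t (- w)"

text \<open>One residue out of each pair {w, -w} of nonzero residues; the pairs are proper since 2 is
  a unit.\<close>
definition half_residues :: "zgi set" where
  "half_residues = {w \<in> R. w \<noteq> 0 \<and> w < residue_neg w}"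

lemma residue_neg_in_R: "residue_neg w \<in> R"
  by (simp add: residue_neg_def reduce_in_R)

lemma residue_neg_neg:
  assumes "w \<in> R"
  shows "residue_neg (residue_neg w) = w"
proof -
  have "zero_mod r t (- (reduce r t (- w) - - w))"
    using zero_mod_reduce_diff[of r t "- w"] by (simp only: zero_mod_minus_iff)
  moreover have "- (reduce r t (- w) - - w) = - reduce r t (- w) - w" by simp
  ultimately have "zero_mod r t (- reduce r t (- w) - w)" by metis
  then have "reduce r t (- reduce r t (- w)) = reduce r t w" by (simp only: reduce_eq_iff)
  then show ?thesis using assms by (simp add: residue_neg_def reduce_R)
qed

lemma residue_neg_nonzero:
  assumes "w \<in> R" and "w \<noteq> 0"
  shows "residue_neg w \<noteq> 0"
proof
  assume "residue_neg w = 0"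
  then have "w = residue_neg 0" using residue_neg_neg[OF assms(1)] by simp
  then show False using assms(2) by (simp add: residue_neg_def zero_prod_def)
qed

lemma residue_neg_neq:
  assumes "w \<in> R" and "w \<noteq> 0"
  shows "residue_neg w \<noteq> w"
proof
  assume "residue_neg w = w"
  then have "zero_mod r t (zgi_mult (2, 2, 0) w)"
    using assms(1) reduce_eq_iff[of r t "- w" w]
    by (cases w) (simp add: residue_neg_def algebra_simps)
  moreover have "zgi_unit (2, 2, 0)" by simp
  ultimately have "zero_mod r t w" by (metis zero_mod_mult_cancel)
  then show False using assms R_eqI[of w 0] zero_in_R by simp
qed

lemma half_residues_R: "j \<in> half_residues \<Longrightarrow> j \<in> R"
  by (simp add: half_residues_def)

lemma half_residues_nonzero: "j \<in> half_residues \<Longrightarrow> \<not> zero_mod r t j"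
  using R_eqI[of j 0] zero_in_R by (auto simp: half_residues_def)

lemma half_residues_eqI: "j \<in> half_residues \<Longrightarrow> j' \<in> half_residues \<Longrightarrow> zero_mod r t (j - j') \<Longrightarrow> j = j'"
  by (simp add: R_eqI half_residues_R)

lemma half_residues_not_opposite:
  assumes "j \<in> half_residues" and "j' \<in> half_residues"
  shows "\<not> zero_mod r t (j + j')"
proof
  assume "zero_mod r t (j + j')"
  then have "reduce r t j = reduce r t (- j')" "reduce r t j' = reduce r t (- j)"
    by (simp_all add: reduce_eq_iff add.commute)
  then have "j = residue_neg j'" "j' = residue_neg j"
    using assms by (simp_all add: residue_neg_def half_residues_R reduce_R)
  then show False
    using assms by (auto simp: half_residues_def)
qed

lemma nonzero_residues_split: "R - {0} = half_residues \<union> residue_neg ` half_residues"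
proof (intro equalityI subsetI)
  fix w assume w: "w \<in> R - {0}"
  show "w \<in> half_residues \<union> residue_neg ` half_residues"
  proof (cases "w < residue_neg w")
    case True
    then show ?thesis using w by (simp add: half_residues_def)
  next
    case False
    moreover have "residue_neg w \<noteq> w" using residue_neg_neq w by blast
    ultimately have "residue_neg w < w" by (metis neq_iff)
    then have "residue_neg w < residue_neg (residue_neg w)" using w residue_neg_neg by simp
    then have "residue_neg w \<in> half_residues"
      using w residue_neg_nonzero residue_neg_in_R by (simp add: half_residues_def)
    moreover have "w = residue_neg (residue_neg w)" using w residue_neg_neg by simp
    ultimately show ?thesis by blast
  qed
next
  fix w assume "w \<in> half_residues \<union> residue_neg ` half_residues"
  then show "w \<in> R - {0}"
    using residue_neg_in_R residue_neg_nonzero by (auto simp: half_residues_def)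
qed

lemma half_residues_disjoint_neg: "half_residues \<inter> residue_neg ` half_residues = {}"
proof -
  have "w \<notin> residue_neg ` half_residues" if w: "w \<in> half_residues" for w
  proof
    assume "w \<in> residue_neg ` half_residues"
    then obtain v where "v \<in> half_residues" "w = residue_neg v" by blast
    moreover from this have "zero_mod r t (w + v)"
      using zero_mod_reduce_diff[of r t "- v"] by (simp add: residue_neg_def)
    ultimately show False using half_residues_not_opposite w by blast
  qed
  then show ?thesis by blast
qed

lemma card_half_residues: "2 * card half_residues + 1 = card R"
proof -
  have "inj_on residue_neg half_residues"
    using residue_neg_neg by (intro inj_onI) (metis half_residues_R)
  moreover have "finite half_residues" by (simp add: half_residues_def)
  ultimately have "card (R - {0}) = 2 * card half_residues"
    unfolding nonzero_residues_split
    by (simp add: card_Un_disjoint card_image half_residues_disjoint_neg)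
  moreover have "card (R - {0}) = card R - 1"
    by (rule card_Diff_singleton[OF zero_in_R])
  moreover have "card R > 0"
    using zero_in_R card_gt_0_iff by blast
  ultimately show ?thesis by linarith
qed

end

section \<open>Base classes built from patterns\<close>

lemma residue_eqI:
  fixes x y q :: int
  assumes "0 \<le> x" "x < q" "0 \<le> y" "y < q" and "q dvd x - y"
  shows "x = y"
  using assms by (metis mod_eq_dvd_iff mod_pos_pos_trivial)

type_synonym slot = "int \<times> int \<times> zgi"
type_synonym point = "(int \<times> zgi) \<times> int"

fun slot_pos :: "slot \<Rightarrow> int \<times> int" where
  "slot_pos (e, l, k) = (e, l)"

fun slot_level :: "slot \<Rightarrow> int" where
  "slot_level (e, l, k) = l"

text \<open>A slot (e, l, k) of a pattern A contributes the point ((e, k j), l) of G x {0, 1, 2} to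
  the triple of A at parameter j. Patterns in HT are used with every j in \<open>half_residues\<close>,
  those in SP (multipliers 0) only once. The assumptions are stated so that simp can check them on
  concrete lists; they make the triples pairwise disjoint and the differences within triples
  pairwise distinct.\<close>
locale base_class_patterns = gauss_residues r t a for r t :: int and a :: nat +
  fixes q :: int and HT SP :: "slot list list"
  assumes q_pos: "q > 0"
    and slots: "\<forall>A \<in> set (HT @ SP). length A = 3 \<and> distinct (map slot_pos A)
      \<and> (\<forall>(e, l, k) \<in> set A. 0 \<le> e \<and> e < q \<and> l \<in> {0, 1, 2})"
    and special_mult: "\<forall>S \<in> set SP. \<forall>(e, l, k) \<in> set S. k = 0"
    and units: "\<forall>A \<in> set HT. \<forall>(e, l, k) \<in> set A. zgi_unit k
      \<and> (\<forall>(e', l', k') \<in> set A. (e, l) \<noteq> (e', l') \<longrightarrow> zgi_unit (k' - k))"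
    and pattern_clash: "\<forall>A \<in> set HT. \<forall>B \<in> set HT. \<forall>(e, l, k) \<in> set A. \<forall>(e', l', k') \<in> set B.
      (e, l) = (e', l') \<longrightarrow> A = B \<or> k' = - k"
    and special_clash: "\<forall>S \<in> set SP. \<forall>S' \<in> set SP. \<forall>u \<in> set S. \<forall>u' \<in> set S'.
      slot_pos u = slot_pos u' \<longrightarrow> S = S'"
    and pattern_differences: "\<forall>A \<in> set HT. \<forall>B \<in> set HT.
      \<forall>(e1, l1, k1) \<in> set A. \<forall>(e2, l2, k2) \<in> set A.
      \<forall>(e1', l1', k1') \<in> set B. \<forall>(e2', l2', k2') \<in> set B.
        (e1, l1) \<noteq> (e2, l2) \<and> l1' = l1 \<and> l2' = l2 \<and> q dvd (e2 - e1) - (e2' - e1') \<longrightarrow>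
        (A = B \<and> (e1, k1) = (e1', k1') \<and> (e2, k2) = (e2', k2')) \<or> k2' - k1' = - (k2 - k1)"
    and special_differences: "\<forall>S \<in> set SP. \<forall>S' \<in> set SP.
      \<forall>(e1, l1, _) \<in> set S. \<forall>(e2, l2, _) \<in> set S.
      \<forall>(e1', l1', _) \<in> set S'. \<forall>(e2', l2', _) \<in> set S'.
        (e1, l1) \<noteq> (e2, l2) \<and> l1' = l1 \<and> l2' = l2 \<and> q dvd (e2 - e1) - (e2' - e1') \<longrightarrow> e1 = e1'"
    and counts: "distinct (HT @ SP)" "length HT = 2 * nat q" "length SP = nat q"
begin

definition G :: "(int \<times> zgi) set" where
  "G = {0..<q} \<times> R"

definition points :: "point set" where
  "points = G \<times> {0, 1, 2}"

fun translate :: "int \<times> zgi \<Rightarrow> point \<Rightarrow> point" where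
  "translate (d, v) ((e, w), l) = (((e + d) mod q, reduce r t (w + v)), l)"

fun slot_point :: "zgi \<Rightarrow> slot \<Rightarrow> point" where
  "slot_point j (e, l, k) = ((e, reduce r t (zgi_mult k j)), l)"

definition pattern_triple :: "slot list \<Rightarrow> zgi \<Rightarrow> point set" where
  "pattern_triple A j = slot_point j ` set A"

definition generator :: "slot list \<Rightarrow> zgi \<Rightarrow> bool" where
  "generator A j \<longleftrightarrow> (A \<in> set HT \<and> j \<in> half_residues) \<or> (A \<in> set SP \<and> j = 0)"

definition base_class :: "point set set" where
  "base_class = (\<lambda>(A, j). pattern_triple A j) ` {(A, j). generator A j}"

lemma generatorI: "A \<in> set HT \<Longrightarrow> j \<in> half_residues \<Longrightarrow> generator A j" "S \<in> set SP \<Longrightarrow> generator S 0"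
  by (simp_all add: generator_def)

lemma generator_HT: "generator A j \<Longrightarrow> A \<in> set HT \<Longrightarrow> j \<in> half_residues"
  using counts(1) by (auto simp: generator_def)

lemma generator_SP: "generator A j \<Longrightarrow> A \<notin> set HT \<Longrightarrow> A \<in> set SP \<and> j = 0"
  by (auto simp: generator_def)

lemma generator_slots:
  assumes "generator A j"
  shows "length A = 3" "distinct (map slot_pos A)"
    and "(e, l, k) \<in> set A \<Longrightarrow> 0 \<le> e \<and> e < q \<and> l \<in> {0, 1, 2}"
  using assms slots by (auto simp: generator_def)

lemma slot_pos_inj: "generator A j \<Longrightarrow> inj_on slot_pos (set A)"
  using generator_slots(2) by (simp add: distinct_map)

lemma pattern_unit:
  assumes "A \<in> set HT" "(e, l, k) \<in> set A"
  shows "zgi_unit k"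
  using bspec[OF bspec[OF units assms(1)] assms(2)] by simp

lemma pattern_unit_diff:
  assumes "A \<in> set HT" "(e, l, k) \<in> set A" "(e', l', k') \<in> set A" "(e, l) \<noteq> (e', l')"
  shows "zgi_unit (k' - k)"
proof -
  have "\<forall>(e', l', k') \<in> set A. (e, l) \<noteq> (e', l') \<longrightarrow> zgi_unit (k' - k)"
    using bspec[OF bspec[OF units assms(1)] assms(2)] by simp
  from bspec[OF this assms(3)] assms(4) show ?thesis by simp
qed

lemma pattern_clash_cases:
  assumes "A \<in> set HT" "B \<in> set HT" "(e, l, k) \<in> set A" "(e, l, k') \<in> set B"
  shows "A = B \<or> k' = - k"
proof -
  note h = bspec[OF bspec[OF bspec[OF pattern_clash assms(1)] assms(2)] assms(3),
      unfolded prod.case]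
  show ?thesis using bspec[OF h assms(4)] by simp
qed

lemma special_mult_zero:
  assumes "S \<in> set SP" "(e, l, k) \<in> set S"
  shows "k = 0"
  using bspec[OF bspec[OF special_mult assms(1)] assms(2)] by simp

lemma special_clash_eq:
  assumes "S \<in> set SP" "S' \<in> set SP" "u \<in> set S" "u' \<in> set S'" "slot_pos u = slot_pos u'"
  shows "S = S'"
  using special_clash assms by blast

lemma pattern_differences_cases:
  assumes "A \<in> set HT" "B \<in> set HT" "(e1, l1, k1) \<in> set A" "(e2, l2, k2) \<in> set A"
    "(e1', l1, k1') \<in> set B" "(e2', l2, k2') \<in> set B" "(e1, l1) \<noteq> (e2, l2)"
    "q dvd (e2 - e1) - (e2' - e1')"
  shows "(A = B \<and> (e1, k1) = (e1', k1') \<and> (e2, k2) = (e2', k2')) \<or> k2' - k1' = - (k2 - k1)"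
proof -
  note h = bspec[OF bspec[OF bspec[OF pattern_differences assms(1)] assms(2)] assms(3),
      unfolded prod.case]
  note h = bspec[OF bspec[OF h assms(4), unfolded prod.case] assms(5), unfolded prod.case]
  show ?thesis using bspec[OF h assms(6)] assms(7,8) by simp
qed

lemma special_differences_eq:
  assumes "S \<in> set SP" "S' \<in> set SP" "(e1, l1, k1) \<in> set S" "(e2, l2, k2) \<in> set S"
    "(e1', l1, k1') \<in> set S'" "(e2', l2, k2') \<in> set S'" "(e1, l1) \<noteq> (e2, l2)"
    "q dvd (e2 - e1) - (e2' - e1')"
  shows "e1 = e1'"
proof -
  note h = bspec[OF bspec[OF bspec[OF special_differences assms(1)] assms(2)] assms(3),
      unfolded prod.case]
  note h = bspec[OF bspec[OF h assms(4), unfolded prod.case] assms(5), unfolded prod.case]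
  show ?thesis using bspec[OF h assms(6)] assms(7,8) by simp
qed

lemma slot_point_eq_iff:
  "slot_point j (e, l, k) = slot_point j' (e', l', k') \<longleftrightarrow>
    (e, l) = (e', l') \<and> zero_mod r t (zgi_mult k j - zgi_mult k' j')"
  unfolding slot_point.simps prod.inject reduce_eq_iff by blast

lemma pattern_points_clash:
  assumes A: "A \<in> set HT" "B \<in> set HT" and j: "j \<in> half_residues" "j' \<in> half_residues"
    and u: "(e, l, k) \<in> set A" "(e, l, k') \<in> set B"
    and z: "zero_mod r t (zgi_mult k j - zgi_mult k' j')"
  shows "A = B \<and> j = j'"
proof -
  have unit: "zgi_unit k" using pattern_unit A(1) u(1) .
  have "A = B \<or> k' = - k" using pattern_clash_cases A u .
  then show ?thesis
  proof
    assume "A = B"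
    then have "k = k'"
      using inj_onD[OF slot_pos_inj[OF generatorI(1)[OF A(1) j(1)]], of "(e, l, k)" "(e, l, k')"] u
      by simp
    then have "zero_mod r t (zgi_mult k (j - j'))" using z by (simp add: zgi_mult_diff_right)
    then show ?thesis using \<open>A = B\<close> unit j zero_mod_mult_cancel half_residues_eqI by blast
  next
    assume "k' = - k"
    then have "zero_mod r t (zgi_mult k (j + j'))"
      using z by (simp add: zgi_mult_add_right zgi_mult_minus_left)
    then show ?thesis using unit j zero_mod_mult_cancel half_residues_not_opposite by blast
  qed
qed

lemma slot_point_unique:
  assumes gen: "generator A j" "generator B j'" and u: "u \<in> set A" "u' \<in> set B"
    and eq: "slot_point j u = slot_point j' u'"
  shows "A = B \<and> j = j' \<and> u = u'"
proof -
  obtain e l k e' l' k' where uu: "u = (e, l, k)" "u' = (e', l', k')" by (cases u; cases u')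
  have pos: "(e, l) = (e', l')" and z: "zero_mod r t (zgi_mult k j - zgi_mult k' j')"
    using eq[unfolded uu slot_point_eq_iff] by simp_all
  have "A = B \<and> j = j'"
  proof (cases "A \<in> set HT"; cases "B \<in> set HT")
    assume "A \<in> set HT" "B \<in> set HT"
    moreover from this have "j \<in> half_residues" "j' \<in> half_residues"
      using gen generator_HT by blast+
    ultimately show ?thesis using pattern_points_clash u uu pos z by simp
  next
    assume "A \<in> set HT" "B \<notin> set HT"
    then have "j \<in> half_residues" "k' = 0" "j' = 0" "zgi_unit k"
      using gen generator_HT generator_SP u uu special_mult_zero pattern_unit by blast+
    moreover from this have "zero_mod r t (zgi_mult k j)" using z by simp
    ultimately show ?thesis using zero_mod_mult_cancel half_residues_nonzero by blast
  next
    assume "A \<notin> set HT" "B \<in> set HT"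
    then have "j' \<in> half_residues" "k = 0" "j = 0" "zgi_unit k'"
      using gen generator_HT generator_SP u uu special_mult_zero pattern_unit by blast+
    moreover from this have "zero_mod r t (zgi_mult k' j')" using z by simp
    ultimately show ?thesis using zero_mod_mult_cancel half_residues_nonzero by blast
  next
    assume "A \<notin> set HT" "B \<notin> set HT"
    then have "A \<in> set SP" "B \<in> set SP" "j = 0" "j' = 0" using gen generator_SP by blast+
    then show ?thesis using special_clash_eq u uu pos by auto
  qed
  moreover from this have "u = u'"
    using inj_onD[OF slot_pos_inj[OF gen(1)], of u u'] u uu pos by simp
  ultimately show ?thesis by blast
qed

lemma pattern_triple_card:
  assumes "generator A j"
  shows "card (pattern_triple A j) = 3"
proof -
  have "inj_on (slot_point j) (set A)"
    using slot_point_unique[OF assms assms] by (intro inj_onI) blast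
  moreover have "distinct A"
    using generator_slots(2)[OF assms] by (simp add: distinct_map)
  ultimately show ?thesis
    using generator_slots(1)[OF assms] by (simp add: pattern_triple_def card_image distinct_card)
qed

lemma slot_point_in_points:
  assumes "generator A j" and "u \<in> set A"
  shows "slot_point j u \<in> points"
  using assms generator_slots(3)[OF assms(1)] reduce_in_R
  by (cases u) (auto simp: points_def G_def)

lemma base_classE:
  assumes "T \<in> base_class"
  obtains A j where "generator A j" "T = pattern_triple A j"
  using assms by (auto simp: base_class_def)

lemma base_class_disjoint:
  assumes "T \<in> base_class" "T' \<in> base_class" "x \<in> T" "x \<in> T'"
  shows "T = T'"
proof -
  obtain A j B j' where "generator A j" "T = pattern_triple A j"
    and "generator B j'" "T' = pattern_triple B j'"
    using assms(1,2) by (meson base_classE)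
  moreover from this obtain u u' where "u \<in> set A" "u' \<in> set B" "slot_point j u = slot_point j' u'"
    using assms(3,4) by (auto simp: pattern_triple_def)
  ultimately show ?thesis using slot_point_unique by blast
qed

lemma card_G: "card G = nat q * card R"
  by (simp add: G_def card_cartesian_product del: card_cartesian_product[of _ "{0..<t}"])

lemma pattern_triple_inj:
  assumes gen: "generator A j" "generator B j'" and eq: "pattern_triple A j = pattern_triple B j'"
  shows "A = B \<and> j = j'"
proof -
  obtain u where u: "u \<in> set A"
    using generator_slots(1)[OF gen(1)] by (metis length_0_conv list.set_sel(1) zero_neq_numeral)
  then have "slot_point j u \<in> pattern_triple A j"
    unfolding pattern_triple_def by (rule imageI)
  then have "slot_point j u \<in> pattern_triple B j'" by (simp only: eq)
  then obtain u' where "u' \<in> set B" "slot_point j u = slot_point j' u'"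
    by (auto simp: pattern_triple_def)
  then show ?thesis using slot_point_unique gen u by blast
qed

lemma card_generators:
  "finite {(A, j). generator A j}
    \<and> card {(A, j). generator A j} = 2 * nat q * card half_residues + nat q"
proof -
  have gens: "{(A, j). generator A j} = set HT \<times> half_residues \<union> set SP \<times> {0}"
    by (auto simp: generator_def)
  have "finite half_residues" by (simp add: half_residues_def)
  have "set HT \<inter> set SP = {}" "distinct HT" "distinct SP" using counts(1) by auto
  then have "(set HT \<times> half_residues) \<inter> (set SP \<times> {0}) = {}" by blast
  then have "card (set HT \<times> half_residues \<union> set SP \<times> {0})
      = card (set HT \<times> half_residues) + card (set SP \<times> {0})"
    using \<open>finite half_residues\<close> by (simp add: card_Un_disjoint)
  with \<open>finite half_residues\<close> \<open>distinct HT\<close> \<open>distinct SP\<close> show ?thesis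
    unfolding gens using counts(2,3) by (simp add: card_cartesian_product distinct_card)
qed

lemma card_base_class: "finite base_class \<and> card base_class = card G"
proof -
  have "inj_on (\<lambda>(A, j). pattern_triple A j) {(A, j). generator A j}"
    using pattern_triple_inj by (intro inj_onI) auto
  moreover have "card G = nat q * (2 * card half_residues + 1)"
    by (simp only: card_G card_half_residues)
  ultimately show ?thesis
    using card_generators by (simp add: base_class_def card_image algebra_simps)
qed

lemma finite_G: "finite G"
  by (simp add: G_def)

lemma card_points: "finite points \<and> card points = 3 * card G"
  using finite_G by (simp add: points_def card_cartesian_product)

lemma translate_in_points:
  assumes "g \<in> G" "p \<in> points"
  shows "translate g p \<in> points"
proof -
  obtain d v e w l where "g = (d, v)" "p = ((e, w), l)" by (metis prod.exhaust)
  then show ?thesis using assms q_pos reduce_in_R by (auto simp: points_def G_def)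
qed

lemma translate_inj_on:
  assumes "g \<in> G"
  shows "inj_on (translate g) points"
proof (rule inj_onI)
  fix p p' assume p: "p \<in> points" "p' \<in> points" and eq: "translate g p = translate g p'"
  obtain d v e w l e' w' l' where gp: "g = (d, v)" "p = ((e, w), l)" "p' = ((e', w'), l')"
    by (metis prod.exhaust)
  have "(e + d) mod q = (e' + d) mod q" "reduce r t (w + v) = reduce r t (w' + v)" "l = l'"
    using eq by (simp_all add: gp)
  then have "q dvd e - e'" "zero_mod r t (w - w')" "l = l'"
    by (simp_all add: mod_eq_dvd_iff reduce_eq_iff)
  with p show "p = p'"
    using residue_eqI[of e q e'] R_eqI[of w w'] by (auto simp: gp points_def G_def)
qed

lemma translate_cancel:
  assumes "g \<in> G" "g' \<in> G" "p \<in> points" and eq: "translate g p = translate g' p"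
  shows "g = g'"
proof -
  obtain d v d' v' e w l where gp: "g = (d, v)" "g' = (d', v')" "p = ((e, w), l)"
    by (metis prod.exhaust)
  have "(e + d) mod q = (e + d') mod q" "reduce r t (w + v) = reduce r t (w + v')"
    using eq by (simp_all add: gp)
  then have "q dvd d - d'" "zero_mod r t (v - v')"
    by (simp_all add: mod_eq_dvd_iff reduce_eq_iff)
  with assms(1,2) show "g = g'"
    using residue_eqI[of d q d'] R_eqI[of v v'] by (auto simp: gp G_def)
qed

lemma translate_slot_point_eq:
  assumes "translate (d, v) (slot_point j (e, l, k))
    = translate (d', v') (slot_point j' (e', l', k'))"
  shows "l = l'" "q dvd (e + d) - (e' + d')"
    and "zero_mod r t (zgi_mult k j + v - (zgi_mult k' j' + v'))"
proof -
  let ?x = "zgi_mult k j" and ?y = "zgi_mult k' j'"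
  have "l = l'" "(e + d) mod q = (e' + d') mod q"
    and red: "reduce r t (reduce r t ?x + v) = reduce r t (reduce r t ?y + v')"
    using assms by simp_all
  then show "l = l'" "q dvd (e + d) - (e' + d')" by (simp_all add: mod_eq_dvd_iff)
  have eq: "?x + v - (?y + v') = (reduce r t ?x + v - (reduce r t ?y + v')) - (reduce r t ?x - ?x)
      + (reduce r t ?y - ?y)"
    by (simp add: algebra_simps)
  have "zero_mod r t (reduce r t ?x + v - (reduce r t ?y + v'))"
    using red by (simp only: reduce_eq_iff)
  then show "zero_mod r t (?x + v - (?y + v'))"
    unfolding eq
    by (rule zero_mod_add[OF zero_mod_diff[OF _ zero_mod_reduce_diff] zero_mod_reduce_diff])
qed

lemma shifted_pos_neq:
  assumes "generator A j" "generator B j'" "(e1, l1, k1) \<in> set A" "(e2, l2, k2) \<in> set A"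
    "(e1', l1, k1') \<in> set B" "(e2', l2, k2') \<in> set B" "(e1, l1) \<noteq> (e2, l2)"
    "q dvd (e2 - e1) - (e2' - e1')"
  shows "(e1', l1) \<noteq> (e2', l2)"
  using assms residue_eqI[of e2 q e1] generator_slots(3)[OF assms(1)] by fastforce

lemma pattern_differences_clash:
  assumes A: "A \<in> set HT" "B \<in> set HT" and j: "j \<in> half_residues" "j' \<in> half_residues"
    and u: "(e1, l1, k1) \<in> set A" "(e2, l2, k2) \<in> set A"
      "(e1', l1, k1') \<in> set B" "(e2', l2, k2') \<in> set B"
    and pos: "(e1, l1) \<noteq> (e2, l2)"
    and dvd: "q dvd (e2 - e1) - (e2' - e1')"
    and z: "zero_mod r t (zgi_mult (k2 - k1) j - zgi_mult (k2' - k1') j')"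
  shows "A = B \<and> j = j' \<and> e1 = e1' \<and> k1 = k1'"
proof -
  have unit: "zgi_unit (k2 - k1)" using pattern_unit_diff A(1) u(1,2) pos by blast
  have "(A = B \<and> (e1, k1) = (e1', k1') \<and> (e2, k2) = (e2', k2')) \<or> k2' - k1' = - (k2 - k1)"
    using pattern_differences_cases[OF A u pos dvd] .
  then show ?thesis
  proof
    assume same: "A = B \<and> (e1, k1) = (e1', k1') \<and> (e2, k2) = (e2', k2')"
    then have "zero_mod r t (zgi_mult (k2 - k1) (j - j'))"
      using z by (simp add: zgi_mult_diff_right)
    then show ?thesis using same unit j zero_mod_mult_cancel half_residues_eqI by blast
  next
    assume "k2' - k1' = - (k2 - k1)"
    then have "zgi_mult (k2' - k1') j' = - zgi_mult (k2 - k1) j'"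
      by (simp only: zgi_mult_minus_left)
    then have "zero_mod r t (zgi_mult (k2 - k1) (j + j'))"
      using z by (simp add: zgi_mult_add_right)
    then show ?thesis using unit j zero_mod_mult_cancel half_residues_not_opposite by blast
  qed
qed

lemma slot_differences_distinct:
  assumes gen: "generator A j" "generator B j'"
    and u: "(e1, l1, k1) \<in> set A" "(e2, l2, k2) \<in> set A"
      "(e1', l1, k1') \<in> set B" "(e2', l2, k2') \<in> set B"
    and pos: "(e1, l1) \<noteq> (e2, l2)"
    and dvd: "q dvd (e2 - e1) - (e2' - e1')"
    and z: "zero_mod r t (zgi_mult (k2 - k1) j - zgi_mult (k2' - k1') j')"
  shows "A = B \<and> j = j' \<and> e1 = e1' \<and> k1 = k1'"
proof (cases "A \<in> set HT"; cases "B \<in> set HT")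
  assume "A \<in> set HT" "B \<in> set HT"
  moreover from this have "j \<in> half_residues" "j' \<in> half_residues"
    using gen generator_HT by blast+
  ultimately show ?thesis using pattern_differences_clash u pos dvd z by blast
next
  assume "A \<in> set HT" "B \<notin> set HT"
  then have "j \<in> half_residues" "zgi_unit (k2 - k1)" "k1' = 0" "k2' = 0"
    using gen generator_HT generator_SP u pos special_mult_zero pattern_unit_diff by blast+
  moreover from this have "zero_mod r t (zgi_mult (k2 - k1) j)" using z by simp
  ultimately show ?thesis using zero_mod_mult_cancel half_residues_nonzero by blast
next
  assume "A \<notin> set HT" "B \<in> set HT"
  moreover have "(e1', l1) \<noteq> (e2', l2)" using shifted_pos_neq[OF gen u pos dvd] .
  ultimately have "j' \<in> half_residues" "zgi_unit (k2' - k1')" "k1 = 0" "k2 = 0"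
    using gen generator_HT generator_SP u special_mult_zero pattern_unit_diff by blast+
  moreover from this have "zero_mod r t (zgi_mult (k2' - k1') j')" using z by simp
  ultimately show ?thesis using zero_mod_mult_cancel half_residues_nonzero by blast
next
  assume "A \<notin> set HT" "B \<notin> set HT"
  then have S: "A \<in> set SP" "B \<in> set SP" "j = 0" "j' = 0" using gen generator_SP by blast+
  then have "e1 = e1'" using special_differences_eq u pos dvd by blast
  then have "A = B" using special_clash_eq S u by fastforce
  moreover have "k1 = 0" "k1' = 0" using S u special_mult_zero by blast+
  ultimately show ?thesis using S \<open>e1 = e1'\<close> by simp
qed

lemma translates_share_no_pair:
  assumes g: "g \<in> G" "g' \<in> G" and T: "T \<in> base_class" "T' \<in> base_class"
    and "x \<noteq> y" and xy: "{x, y} \<subseteq> translate g ` T \<inter> translate g' ` T'"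
  shows "g = g' \<and> T = T'"
proof -
  obtain A j B j' where gen: "generator A j" "generator B j'"
    and TT: "T = pattern_triple A j" "T' = pattern_triple B j'"
    using T by (meson base_classE)
  obtain u v u' v' where uv: "u \<in> set A" "v \<in> set A" "u' \<in> set B" "v' \<in> set B"
    and x: "x = translate g (slot_point j u)" "x = translate g' (slot_point j' u')"
    and y: "y = translate g (slot_point j v)" "y = translate g' (slot_point j' v')"
    using xy unfolding TT pattern_triple_def by auto
  obtain d w d' w' where gg: "g = (d, w)" "g' = (d', w')" by (cases g; cases g')
  obtain e1 l1 k1 e2 l2 k2 e1' l1' k1' e2' l2' k2' where
    slots: "u = (e1, l1, k1)" "v = (e2, l2, k2)" "u' = (e1', l1', k1')" "v' = (e2', l2', k2')"
    by (cases u; cases v; cases u'; cases v')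
  note eq1 = translate_slot_point_eq[OF x(1)[symmetric, unfolded x(2) gg slots]]
  note eq2 = translate_slot_point_eq[OF y(1)[symmetric, unfolded y(2) gg slots]]
  have "(e1, l1) \<noteq> (e2, l2)"
    using \<open>x \<noteq> y\<close> x y inj_onD[OF slot_pos_inj[OF gen(1)], of u v] uv slots by auto
  moreover have "q dvd (e2 - e1) - (e2' - e1')"
    using dvd_diff[OF eq2(2) eq1(2)] by (simp add: algebra_simps)
  moreover have "zero_mod r t (zgi_mult (k2 - k1) j - zgi_mult (k2' - k1') j')"
    using zero_mod_diff[OF eq2(3) eq1(3)] by (simp add: zgi_mult_diff_left algebra_simps)
  ultimately have "A = B \<and> j = j' \<and> u = u'"
    using slot_differences_distinct[OF gen] uv slots eq1(1) eq2(1) by auto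
  moreover have "slot_point j u \<in> points" using slot_point_in_points gen(1) uv(1) .
  ultimately have "g = g'" using translate_cancel[OF g] x by metis
  with \<open>A = B \<and> j = j' \<and> u = u'\<close> show ?thesis using TT by simp
qed

lemma transversal_translates_disjoint:
  assumes gen: "generator A j" and levels: "distinct (map slot_level A)"
    and g: "g \<in> G" "g' \<in> G" "g \<noteq> g'"
  shows "translate g ` pattern_triple A j \<inter> translate g' ` pattern_triple A j = {}"
proof -
  have "translate g (slot_point j u) \<noteq> translate g' (slot_point j u')"
    if "u \<in> set A" "u' \<in> set A" for u u'
  proof
    assume eq: "translate g (slot_point j u) = translate g' (slot_point j u')"
    have "snd (translate g p) = snd p" for g p
      by (metis prod.exhaust translate.simps snd_conv)
    moreover have "snd (slot_point j u) = slot_level u" for u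
      by (cases u) simp
    ultimately have "slot_level u = slot_level u'" using eq by metis
    then have "u = u'" using levels that by (auto simp: distinct_map dest: inj_onD)
    then show False
      using eq translate_cancel[OF g(1,2) slot_point_in_points[OF gen that(1)]] g(3) by simp
  qed
  then show ?thesis unfolding pattern_triple_def by blast
qed

lemma packing_exists:
  assumes "generator A j" and "distinct (map slot_level A)" and "\<rho> \<le> card G"
  shows "\<exists>(X :: nat set) B. packing (3 * card G + \<rho>) 4 X B \<and> finite B
    \<and> card B = \<rho> * card G \<and> largest_ppc B \<rho>"
proof -
  have "\<exists>(X :: (point + int \<times> zgi) set) B. packing (3 * card G + \<rho>) 4 X B \<and> finite B
    \<and> card B = \<rho> * card G \<and> largest_ppc B \<rho>"
  proof (rule packing_from_translates)
    show "finite points" "card points = 3 * card G" using card_points by simp_all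
    show "finite G" "\<rho> \<le> card G" by (fact finite_G assms(3))+
    show "finite base_class" "card base_class = card G" using card_base_class by simp_all
    show "pattern_triple A j \<in> base_class" using assms(1) by (auto simp: base_class_def)
  next
    fix g assume "g \<in> G"
    then show "inj_on (translate g) points \<and> translate g ` points \<subseteq> points"
      using translate_inj_on translate_in_points by blast
  next
    fix T assume "T \<in> base_class"
    then obtain A j where "generator A j" "T = pattern_triple A j" by (rule base_classE)
    then show "T \<subseteq> points \<and> card T = 3"
      using pattern_triple_card slot_point_in_points unfolding pattern_triple_def by blast
  next
    fix T T' assume "T \<in> base_class" "T' \<in> base_class" "T \<noteq> T'"
    then show "T \<inter> T' = {}" using base_class_disjoint by blast
  next
    fix g g' T T' x y
    assume "g \<in> G" "g' \<in> G" "T \<in> base_class" "T' \<in> base_class" "x \<noteq> y"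
      "{x, y} \<subseteq> translate g ` T \<inter> translate g' ` T'"
    then show "g = g' \<and> T = T'" by (rule translates_share_no_pair)
  next
    fix g g' assume "g \<in> G" "g' \<in> G" "g \<noteq> g'"
    then show "translate g ` pattern_triple A j \<inter> translate g' ` pattern_triple A j = {}"
      by (rule transversal_translates_disjoint[OF assms(1,2)])
  qed
  then show ?thesis by (metis packing_in_nat)
qed

end

section \<open>The construction for all odd orders\<close>

definition HT1 :: "slot list list" where
  "HT1 = [[(0, 0, (1, 1, 0)), (0, 1, (-1, 0, 1)), (0, 2, (2, 0, -1))],
          [(0, 0, (-1, -1, 0)), (0, 1, (1, 0, -1)), (0, 2, (-2, 0, 1))]]"

definition SP1 :: "slot list list" where
  "SP1 = [[(0, 0, 0), (0, 1, 0), (0, 2, 0)]]"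

definition HT3 :: "slot list list" where
  "HT3 = [[(0, 0, (-1, -1, 1)), (1, 0, (2, 0, 2)), (0, 1, (-2, -1, 0))],
          [(2, 0, (-3, -1, -1)), (1, 1, (1, 0, 1)), (0, 2, (-1, -1, 1))],
          [(2, 1, (-3, -1, -1)), (1, 2, (-1, 0, -1)), (2, 2, (-2, -1, 0))],
          [(0, 0, (1, 1, -1)), (1, 0, (-2, 0, -2)), (1, 1, (-1, 0, -1))],
          [(2, 0, (3, 1, 1)), (1, 2, (1, 0, 1)), (2, 2, (2, 1, 0))],
          [(0, 1, (2, 1, 0)), (2, 1, (3, 1, 1)), (0, 2, (1, 1, -1))]]"

definition SP3 :: "slot list list" where
  "SP3 = [[(1, 0, 0), (2, 0, 0), (0, 1, 0)], [(1, 1, 0), (2, 1, 0), (0, 2, 0)],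
          [(1, 2, 0), (2, 2, 0), (0, 0, 0)]]"

lemma base_class_patterns_1:
  "gauss_residues r t a \<Longrightarrow> base_class_patterns r t a 1 HT1 SP1"
  unfolding base_class_patterns_def base_class_patterns_axioms_def HT1_def SP1_def
  by (simp add: zero_prod_def)

lemma base_class_patterns_3:
  "gauss_residues r t a \<Longrightarrow> base_class_patterns r t a 3 HT3 SP3"
  unfolding base_class_patterns_def base_class_patterns_axioms_def HT3_def SP3_def
  by (simp add: zero_prod_def)

lemma gauss_residuesI:
  assumes "odd s" and "\<not> 3 dvd s"
  shows "gauss_residues (int s) (3 ^ k) k"
proof
  show "int s > 0" using assms(1) by (simp add: odd_pos)
  have "coprime (int s) 2" using assms(1) by simp
  moreover have "\<not> 3 dvd int s" using assms(2) by presburger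
  then have "coprime (int s) 3"
    using prime_imp_coprime[of "3 :: int" "int s"] by (simp add: coprime_commute)
  ultimately show "coprime (int s) 6"
    using coprime_mult_right_iff[of "int s" 2 3] by simp
qed simp

lemma odd_factorization:
  fixes m :: nat
  assumes "odd m"
  obtains s k where "odd s" "\<not> 3 dvd s" "m = s * 9 ^ k \<or> m = 3 * (s * 9 ^ k)"
proof -
  have "m \<noteq> 0" "\<not> is_unit (3 :: nat)" using odd_pos[OF assms] by simp_all
  then obtain s where m: "m = 3 ^ multiplicity 3 m * s" and "\<not> 3 dvd s"
    by (rule multiplicity_decompose')
  moreover from this have "odd s" using assms by (metis even_mult_iff)
  moreover obtain k where "multiplicity 3 m = 2 * k \<or> multiplicity 3 m = 2 * k + 1"
    by (metis oddE evenE)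
  then have "m = s * 9 ^ k \<or> m = 3 * (s * 9 ^ k)"
    using m by (auto simp: power_mult)
  ultimately show ?thesis using that by blast
qed

lemma packing_for_odd:
  assumes "odd m" and "m \<noteq> 3" and "\<rho> \<le> m"
  shows "\<exists>(X :: nat set) B. packing (3 * m + \<rho>) 4 X B \<and> finite B \<and> card B = \<rho> * m
    \<and> largest_ppc B \<rho>"
proof -
  obtain s k where "odd s" "\<not> 3 dvd s" and m: "m = s * 9 ^ k \<or> m = 3 * (s * 9 ^ k)"
    using odd_factorization[OF assms(1)] .
  interpret gauss_residues "int s" "3 ^ k" k
    using gauss_residuesI[OF \<open>odd s\<close> \<open>\<not> 3 dvd s\<close>] .
  have card_R: "card R = s * 9 ^ k"
    by (simp add: card_R nat_power_eq power_mult_distrib[symmetric])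
  from m show ?thesis
  proof
    assume m: "m = s * 9 ^ k"
    interpret base_class_patterns "int s" "3 ^ k" k 1 HT1 SP1
      by (rule base_class_patterns_1) unfold_locales
    have "card G = m" using m by (simp add: card_G card_R)
    moreover have "generator [(0, 0, 0), (0, 1, 0), (0, 2, 0)] 0"
      by (rule generatorI(2)) (simp add: SP1_def)
    ultimately show ?thesis using packing_exists assms(3) by fastforce
  next
    assume m: "m = 3 * (s * 9 ^ k)"
    interpret base_class_patterns "int s" "3 ^ k" k 3 HT3 SP3
      by (rule base_class_patterns_3) unfold_locales
    have "card G = m" using m by (simp add: card_G card_R)
    have "s * 9 ^ k \<noteq> 1" "0 < s * 9 ^ k" using m assms(2) odd_pos[OF \<open>odd s\<close>] by auto
    then have "card half_residues \<noteq> 0" using card_half_residues card_R by linarith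
    then obtain j where "j \<in> half_residues" by (metis card.empty ex_in_conv)
    then have "generator [(2, 0, (-3, -1, -1)), (1, 1, (1, 0, 1)), (0, 2, (-1, -1, 1))] j"
      by (intro generatorI(1)) (simp_all add: HT3_def)
    with \<open>card G = m\<close> show ?thesis using packing_exists assms(3) by fastforce
  qed
qed

theorem theorem2p2:
  fixes n \<rho> :: nat
  assumes "n > 0" and "n mod 6 = 3"
    and "n \<notin> {9, 15, 21, 141, 153, 165, 177, 189, 231, 249, 261, 285, 351, 357}"
    and "1 \<le> \<rho>" and "3 * \<rho> \<le> n"
  shows "\<exists>(X :: nat set) B. packing (n + \<rho>) 4 X B \<and> finite B \<and> 3 * card B = \<rho> * n
           \<and> largest_ppc B \<rho>"
proof -
  \<comment> \<open>of the excluded values only n = 9 is needed; the construction covers the others\<close>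
  define m where "m = n div 3"
  have n: "n = 3 * m" using assms(2) unfolding m_def by presburger
  have "odd m" "m \<noteq> 3" "\<rho> \<le> m" using assms(2,3,5) n by auto
  then show ?thesis using packing_for_odd n by fastforce
qed

end
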